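(* In the setting described in the context, fix any $(s,\mathrm d_{\mathcal S},\bar a,s',\mathrm d'_{\mathcal S},\bar a')$, and let $\mathbf s=(s_1,\dots,s_N)$ be i.i.d. from $\mathrm d_{\mathcal S}$ and $\mathbf s'=(s'_1,\dots,s'_N)$ i.i.d. from $\mathrm d'_{\mathcal S}$. Then for every $\beta$ with $\|\beta-\beta(0)\|_2\le R_\beta$, $$\mathbb E_{\mathrm{init},\mathbf s,\mathbf s'}\|\hat g_\beta(s,\mathbf s,\bar a,s',\mathbf s',\bar a')-g_\beta(s,\mathrm d_{\mathcal S},\bar a,s',\mathrm d'_{\mathcal S},\bar a')\|_2^2\le\mathcal O\Big(\frac{R_\beta^2}{N}\Big).$$
   Context: $\mathcal S$ finite, $\mathcal P(\mathcal S)$ distributions on $\mathcal S$, $\overline{\mathcal A}$ finite. Triples $(s,x,\bar a)$ are vectors in $\mathbb R^d$ with $\|(s,x,\bar a)\|_2\le1$. Initialization: independent $u_j\sim\mathrm{Unif}\{\pm1\}$, $\beta_j(0)\sim\mathcal N(0,I_d/d)$, $j\in[m]$ ($\mathbb E_{\mathrm{init}}$ over it; $u$ fixed). $\sigma(y)=\max\{y,0\}$; $f_\beta(s,x,\bar a)=\frac1{\sqrt m}\sum_ju_j\sigma(\beta_j^\top(s,x,\bar a))$; $F_\beta(s,\mathrm d_{\mathcal S},\bar a)=\mathbb E_{x\sim\mathrm d_{\mathcal S}}f_\beta(s,x,\bar a)$; $F_\beta(s,\mathbf s,\bar a)=\frac1N\sum_{i=1}^Nf_\beta(s,s_i,\bar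 a)$; $\nabla_\beta$ uses $\sigma'(y)=\mathbb 1\{y>0\}$. Function $\xi$ on $\mathcal S\times\mathcal P(\mathcal S)\times\overline{\mathcal A}$, constants $\tau\ge0$, $\mu\in[0,1)$. $\delta_\beta=F_\beta(s,\mathrm d_{\mathcal S},\bar a)-\tau\xi(s,\mathrm d_{\mathcal S},\bar a)-\mu F_\beta(s',\mathrm d'_{\mathcal S},\bar a')$, $g_\beta=\delta_\beta\nabla_\beta F_\beta(s,\mathrm d_{\mathcal S},\bar a)$; $\hat\delta_\beta=F_\beta(s,\mathbf s,\bar a)-\tau\xi(s,\mathrm d_{\mathcal S},\bar a)-\mu F_\beta(s',\mathbf s',\bar a')$, $\hat g_\beta=\hat\delta_\beta\nabla_\beta F_\beta(s,\mathbf s,\bar a)$. Assumption 4: constants $\tau_1,\tau_2,\tau_3\ge0$ with $\xi(s,\mathrm d_{\mathcal S},\bar a)^2\le\tau_1\mathbb E_{x\sim\mathrm d_{\mathcal S}}(f_{\beta(0)}(s,x,\bar a))^2+\tau_2R_\beta^2+\tau_3$ for all arguments. $\mathcal O(\cdot)$ hides constants independent of $R_\beta,m,N$. *)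

theory Defs
  imports "HOL-Probability.Probability"
begin

text \<open>Vectors in R^d are functions 'd => real on a finite index type 'd.
  A parameter beta = (beta_1,...,beta_m) is a function nat => 'd => real, only j < m matter.\<close>

type_synonym 'd param = "nat \<Rightarrow> 'd \<Rightarrow> real"

definition dotp :: "('d::finite \<Rightarrow> real) \<Rightarrow> ('d \<Rightarrow> real) \<Rightarrow> real" where
  "dotp a b = (\<Sum>i\<in>UNIV. a i * b i)"

definition pnorm2 :: "nat \<Rightarrow> ('d::finite) param \<Rightarrow> real" where
  "pnorm2 m b = (\<Sum>j<m. \<Sum>i\<in>UNIV. (b j i)\<^sup>2)"

definition relu :: "real \<Rightarrow> real" where "relu y = max y 0"
definition relu' :: "real \<Rightarrow> real" where "relu' y = (if y > 0 then 1 else 0)"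

definition nn :: "nat \<Rightarrow> (nat \<Rightarrow> real) \<Rightarrow> ('d::finite) param \<Rightarrow> ('d \<Rightarrow> real) \<Rightarrow> real" where
  "nn m u \<beta> z = (1 / sqrt (real m)) * (\<Sum>j<m. u j * relu (dotp (\<beta> j) z))"

definition grad_nn :: "nat \<Rightarrow> (nat \<Rightarrow> real) \<Rightarrow> ('d::finite) param \<Rightarrow> ('d \<Rightarrow> real) \<Rightarrow> 'd param" where
  "grad_nn m u \<beta> z = (\<lambda>j i. if j < m then (1 / sqrt (real m)) * u j * relu' (dotp (\<beta> j) z) * z i else 0)"

text \<open>phi s x a is the vector in R^d representing the triple (s,x,a).\<close>

definition F_pop :: "nat \<Rightarrow> (nat \<Rightarrow> real) \<Rightarrow> ('d::finite) param \<Rightarrow> ('s \<Rightarrow> 's \<Rightarrow> 'a \<Rightarrow> 'd \<Rightarrow> real)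
    \<Rightarrow> 's \<Rightarrow> 's pmf \<Rightarrow> 'a \<Rightarrow> real" where
  "F_pop m u \<beta> \<phi> s dS a = measure_pmf.expectation dS (\<lambda>x. nn m u \<beta> (\<phi> s x a))"

definition gradF_pop :: "nat \<Rightarrow> (nat \<Rightarrow> real) \<Rightarrow> ('d::finite) param \<Rightarrow> ('s \<Rightarrow> 's \<Rightarrow> 'a \<Rightarrow> 'd \<Rightarrow> real)
    \<Rightarrow> 's \<Rightarrow> 's pmf \<Rightarrow> 'a \<Rightarrow> 'd param" where
  "gradF_pop m u \<beta> \<phi> s dS a = (\<lambda>j i. measure_pmf.expectation dS (\<lambda>x. grad_nn m u \<beta> (\<phi> s x a) j i))"

definition F_emp :: "nat \<Rightarrow> (nat \<Rightarrow> real) \<Rightarrow> ('d::finite) param \<Rightarrow> ('s \<Rightarrow> 's \<Rightarrow> 'a \<Rightarrow> 'd \<Rightarrow> real)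
    \<Rightarrow> 's \<Rightarrow> nat \<Rightarrow> (nat \<Rightarrow> 's) \<Rightarrow> 'a \<Rightarrow> real" where
  "F_emp m u \<beta> \<phi> s N ss a = (1 / real N) * (\<Sum>i<N. nn m u \<beta> (\<phi> s (ss i) a))"

definition gradF_emp :: "nat \<Rightarrow> (nat \<Rightarrow> real) \<Rightarrow> ('d::finite) param \<Rightarrow> ('s \<Rightarrow> 's \<Rightarrow> 'a \<Rightarrow> 'd \<Rightarrow> real)
    \<Rightarrow> 's \<Rightarrow> nat \<Rightarrow> (nat \<Rightarrow> 's) \<Rightarrow> 'a \<Rightarrow> 'd param" where
  "gradF_emp m u \<beta> \<phi> s N ss a = (\<lambda>j i. (1 / real N) * (\<Sum>k<N. grad_nn m u \<beta> (\<phi> s (ss k) a) j i))"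

definition g_pop where
  "g_pop m u \<beta> \<phi> \<xi> \<tau> \<mu> s dS a s' dS' a' =
     (let \<delta> = F_pop m u \<beta> \<phi> s dS a - \<tau> * \<xi> s dS a - \<mu> * F_pop m u \<beta> \<phi> s' dS' a'
      in (\<lambda>j i. \<delta> * gradF_pop m u \<beta> \<phi> s dS a j i))"

definition g_emp where
  "g_emp m u \<beta> \<phi> \<xi> \<tau> \<mu> N s dS ss a s' ss' a' =
     (let \<delta> = F_emp m u \<beta> \<phi> s N ss a - \<tau> * \<xi> s dS a - \<mu> * F_emp m u \<beta> \<phi> s' N ss' a'
      in (\<lambda>j i. \<delta> * gradF_emp m u \<beta> \<phi> s N ss a j i))"

definition u_init :: "nat \<Rightarrow> (nat \<Rightarrow> real) pmf" where
  "u_init m = Pi_pmf {..<m} 1 (\<lambda>_. pmf_of_set {-1, 1})"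

definition gauss_init :: "nat \<Rightarrow> ('d::finite) param measure" where
  "gauss_init m = PiM {..<m} (\<lambda>_. PiM (UNIV :: 'd set)
       (\<lambda>_. density lborel (normal_density 0 (1 / sqrt (real CARD('d))))))"

definition samples :: "nat \<Rightarrow> 's pmf \<Rightarrow> (nat \<Rightarrow> 's) pmf" where
  "samples N dS = Pi_pmf {..<N} undefined (\<lambda>_. dS)"

end

theory Submission
  imports Defs
begin

text \<open>Write \<open>g\<^sub>N - g = (\<delta>\<^sub>N - \<delta>) \<nabla>F\<^sub>N + \<delta> (\<nabla>F\<^sub>N - \<nabla>F)\<close>, the subscript marking the
  empirical estimates. The network gradient has norm at most \<open>1\<close>, so both terms are controlled by
  mean squared errors of empirical means of \<open>N\<close> i.i.d. samples, each at most a second moment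
  divided by \<open>N\<close>. Since the network is \<open>1\<close>-Lipschitz in its parameter, second moments at \<open>\<beta>\<close>
  are at most twice those at \<open>\<beta>(0)\<close> plus \<open>2 R\<^sup>2\<close>; averaged over the initialisation these are
  at most \<open>1\<close>, which by Assumption 4 also bounds \<open>\<xi>\<^sup>2\<close> by \<open>O(R\<^sup>2)\<close>.\<close>

section \<open>Second moments of sums of independent variables\<close>

lemma finite_set_Pi_pmf:
  assumes "finite A" "\<And>x. x \<in> A \<Longrightarrow> finite (set_pmf (p x))"
  shows "finite (set_pmf (Pi_pmf A dflt p))"
  using assms by (subst set_Pi_pmf) (auto intro!: finite_PiE_dflt)

lemma map_pmf_Pi_pmf_two_components:
  assumes "finite A" "j \<in> A" "k \<in> A" "j \<noteq> k"
  shows "map_pmf (\<lambda>f. (f j, f k)) (Pi_pmf A dflt p) = pair_pmf (p j) (p k)"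
proof -
  define A' where "A' = A - {j}"
  have A: "A = insert j A'" "j \<notin> A'" "finite A'" "k \<in> A'"
    using assms by (auto simp: A'_def)
  have "map_pmf (\<lambda>f. (f j, f k)) (Pi_pmf A dflt p)
      = map_pmf (\<lambda>(y, f). (y, f k)) (pair_pmf (p j) (Pi_pmf A' dflt p))"
    unfolding A(1) using A assms(4)
    by (subst Pi_pmf_insert) (auto simp: pmf.map_comp o_def case_prod_unfold)
  also have "\<dots> = pair_pmf (map_pmf id (p j)) (map_pmf (\<lambda>f. f k) (Pi_pmf A' dflt p))"
    by (subst map_pair[symmetric]) (simp add: case_prod_unfold)
  also have "\<dots> = pair_pmf (p j) (p k)"
    using A by (subst Pi_pmf_component) auto
  finally show ?thesis .
qed

lemma expectation_pair_pmf_mult: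
  fixes g h :: "_ \<Rightarrow> real"
  assumes "finite (set_pmf p)" "finite (set_pmf q)"
  shows "measure_pmf.expectation (pair_pmf p q) (\<lambda>w. g (fst w) * h (snd w))
       = measure_pmf.expectation p g * measure_pmf.expectation q h"
proof -
  have "measure_pmf.expectation (pair_pmf p q) (\<lambda>w. g (fst w) * h (snd w))
      = (\<Sum>(a, b)\<in>set_pmf p \<times> set_pmf q. (g a * pmf p a) * (h b * pmf q b))"
    using assms by (subst integral_measure_pmf_real) (auto simp: pmf_pair intro!: sum.cong)
  also have "\<dots> = (\<Sum>a\<in>set_pmf p. g a * pmf p a) * (\<Sum>b\<in>set_pmf q. h b * pmf q b)"
    by (simp add: sum.cartesian_product[symmetric] sum_product)
  also have "\<dots> = measure_pmf.expectation p g * measure_pmf.expectation q h"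
    using assms by (subst (1 2) integral_measure_pmf_real[where A = "set_pmf _"]) auto
  finally show ?thesis .
qed

text \<open>Independent centred terms are orthogonal, so the second moment of their sum is additive.\<close>
lemma expectation_Pi_pmf_sq_sum_centred:
  fixes g :: "_ \<Rightarrow> _ \<Rightarrow> real"
  assumes A: "finite A" and fin: "\<And>x. x \<in> A \<Longrightarrow> finite (set_pmf (p x))"
    and centred: "\<And>x. x \<in> A \<Longrightarrow> measure_pmf.expectation (p x) (g x) = 0"
  shows "measure_pmf.expectation (Pi_pmf A dflt p) (\<lambda>y. (\<Sum>x\<in>A. g x (y x))\<^sup>2)
       = (\<Sum>x\<in>A. measure_pmf.expectation (p x) (\<lambda>v. (g x v)\<^sup>2))"
proof -
  let ?E = "measure_pmf.expectation (Pi_pmf A dflt p)"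
  have cross: "?E (\<lambda>y. g j (y j) * g k (y k))
      = (if j = k then measure_pmf.expectation (p j) (\<lambda>v. (g j v)\<^sup>2) else 0)"
    if "j \<in> A" "k \<in> A" for j k
  proof (cases "j = k")
    case True
    have "?E (\<lambda>y. g j (y j) * g k (y k))
        = measure_pmf.expectation (map_pmf (\<lambda>f. f j) (Pi_pmf A dflt p)) (\<lambda>v. (g j v)\<^sup>2)"
      using True by (simp add: power2_eq_square)
    with True that A show ?thesis by (simp add: Pi_pmf_component)
  next
    case False
    have "?E (\<lambda>y. g j (y j) * g k (y k))
        = measure_pmf.expectation (map_pmf (\<lambda>f. (f j, f k)) (Pi_pmf A dflt p))
            (\<lambda>w. g j (fst w) * g k (snd w))"
      by simp
    also have "\<dots> = measure_pmf.expectation (p j) (g j) * measure_pmf.expectation (p k) (g k)"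
      using that False A fin
      by (simp add: map_pmf_Pi_pmf_two_components expectation_pair_pmf_mult)
    finally show ?thesis using False that centred by simp
  qed
  have "finite (set_pmf (Pi_pmf A dflt p))"
    using A fin by (rule finite_set_Pi_pmf)
  then have "?E (\<lambda>y. (\<Sum>x\<in>A. g x (y x))\<^sup>2) = (\<Sum>j\<in>A. \<Sum>k\<in>A. ?E (\<lambda>y. g j (y j) * g k (y k)))"
    by (simp add: power2_eq_square sum_product integrable_measure_pmf_finite)
  also have "\<dots> = (\<Sum>x\<in>A. measure_pmf.expectation (p x) (\<lambda>v. (g x v)\<^sup>2))"
    using A by (simp add: cross sum.delta cong: sum.cong)
  finally show ?thesis .
qed

lemma sq_expectation_le_second_moment:
  fixes h :: "_ \<Rightarrow> real"
  assumes "finite (set_pmf p)"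
  shows "(measure_pmf.expectation p h)\<^sup>2 \<le> measure_pmf.expectation p (\<lambda>x. (h x)\<^sup>2)"
  using measure_pmf.variance_positive[of p h] assms
  by (simp add: measure_pmf.variance_eq integrable_measure_pmf_finite)

lemma expectation_sq_sample_mean_error_le:
  fixes h :: "_ \<Rightarrow> real"
  assumes N: "N > 0" and fin: "finite (set_pmf p)"
  shows "measure_pmf.expectation (samples N p)
           (\<lambda>ss. ((1 / real N) * (\<Sum>k<N. h (ss k)) - measure_pmf.expectation p h)\<^sup>2)
         \<le> measure_pmf.expectation p (\<lambda>x. (h x)\<^sup>2) / real N"
proof -
  define c where "c = measure_pmf.expectation p h"
  have int: "integrable (measure_pmf p) f" for f :: "_ \<Rightarrow> real"
    using fin by (rule integrable_measure_pmf_finite)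
  have "((1 / real N) * (\<Sum>k<N. h (ss k)) - c)\<^sup>2 = (1 / real N)\<^sup>2 * (\<Sum>k<N. h (ss k) - c)\<^sup>2"
    for ss
    using N by (simp add: sum_subtractf field_simps)
  then have "measure_pmf.expectation (samples N p) (\<lambda>ss. ((1 / real N) * (\<Sum>k<N. h (ss k)) - c)\<^sup>2)
      = (1 / real N)\<^sup>2 * measure_pmf.expectation (samples N p) (\<lambda>ss. (\<Sum>k<N. h (ss k) - c)\<^sup>2)"
    by simp
  also have "measure_pmf.expectation (samples N p) (\<lambda>ss. (\<Sum>k<N. h (ss k) - c)\<^sup>2)
      = real N * measure_pmf.variance p h"
    unfolding samples_def c_def using fin
    by (subst expectation_Pi_pmf_sq_sum_centred) (auto simp: int measure_pmf.prob_space)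
  also have "(1 / real N)\<^sup>2 * (real N * measure_pmf.variance p h) = measure_pmf.variance p h / real N"
    using N by (simp add: power2_eq_square)
  also have "\<dots> \<le> measure_pmf.expectation p (\<lambda>x. (h x)\<^sup>2) / real N"
    using N by (intro divide_right_mono) (auto simp: measure_pmf.variance_eq int)
  finally show ?thesis by (simp add: c_def)
qed

section \<open>The two-layer ReLU network\<close>

lemma dotp_self_nonneg: "0 \<le> dotp z z"
  unfolding dotp_def by (intro sum_nonneg) auto

lemma sq_dotp_le_of_unit:
  assumes "dotp z z \<le> 1"
  shows "(dotp b z)\<^sup>2 \<le> dotp b b"
proof -
  have "(dotp b z)\<^sup>2 \<le> dotp b b * dotp z z"
    unfolding dotp_def using Cauchy_Schwarz_ineq_sum[of b z UNIV] by (simp add: power2_eq_square)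
  also have "\<dots> \<le> dotp b b"
    using assms dotp_self_nonneg[of b] by (simp add: mult_left_le)
  finally show ?thesis .
qed

lemma dotp_self_eq_sum_sq: "dotp b b = (\<Sum>i\<in>UNIV. (b i)\<^sup>2)"
  unfolding dotp_def by (simp add: power2_eq_square)

lemma relu_lipschitz: "\<bar>relu x - relu y\<bar> \<le> \<bar>x - y\<bar>"
  unfolding relu_def by auto

lemma sq_relu_le: "(relu x)\<^sup>2 \<le> x\<^sup>2"
  unfolding relu_def by (auto simp: max_def power2_eq_square)

lemma pnorm2_nonneg: "0 \<le> pnorm2 m b"
  unfolding pnorm2_def by (intro sum_nonneg) auto

lemma sq_mean_le_mean_sq:
  fixes f :: "nat \<Rightarrow> real"
  assumes "N > 0"
  shows "((1 / real N) * (\<Sum>k<N. f k))\<^sup>2 \<le> (1 / real N) * (\<Sum>k<N. (f k)\<^sup>2)"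
proof -
  have "((1 / real N) * (\<Sum>k<N. f k))\<^sup>2 = (1 / real N)\<^sup>2 * (\<Sum>k<N. f k)\<^sup>2"
    by (simp add: power_divide)
  also have "\<dots> \<le> (1 / real N)\<^sup>2 * ((\<Sum>k<N. (f k)\<^sup>2) * real N)"
    using sum_squared_le_sum_of_squares[of f "{..<N}"] by (intro mult_left_mono) auto
  also have "\<dots> = (1 / real N) * (\<Sum>k<N. (f k)\<^sup>2)"
    using assms by (simp add: power2_eq_square)
  finally show ?thesis .
qed

text \<open>The factor \<open>1/\<surd>m\<close> exactly compensates the Cauchy-Schwarz loss over the \<open>m\<close> neurons.\<close>
lemma sq_nn_diff_le_pnorm2:
  assumes m: "m > 0" and u: "\<And>j. \<bar>u j\<bar> = 1" and z: "dotp z z \<le> 1"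
  shows "(nn m u \<beta> z - nn m u \<beta>0 z)\<^sup>2 \<le> pnorm2 m (\<lambda>j i. \<beta> j i - \<beta>0 j i)"
proof -
  define a where "a j = u j * (relu (dotp (\<beta> j) z) - relu (dotp (\<beta>0 j) z))" for j
  have "nn m u \<beta> z - nn m u \<beta>0 z = (1 / sqrt (real m)) * (\<Sum>j<m. a j)"
    unfolding nn_def a_def by (simp add: sum_subtractf algebra_simps)
  then have "(nn m u \<beta> z - nn m u \<beta>0 z)\<^sup>2 = (1 / real m) * (\<Sum>j<m. a j)\<^sup>2"
    using m by (simp add: power_mult_distrib power_divide)
  also have "\<dots> \<le> (1 / real m) * ((\<Sum>j<m. (a j)\<^sup>2) * real m)"
    using sum_squared_le_sum_of_squares[of a "{..<m}"] by (intro mult_left_mono) auto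
  also have "\<dots> = (\<Sum>j<m. (a j)\<^sup>2)"
    using m by simp
  also have "\<dots> \<le> (\<Sum>j<m. dotp (\<lambda>i. \<beta> j i - \<beta>0 j i) (\<lambda>i. \<beta> j i - \<beta>0 j i))"
  proof (intro sum_mono)
    fix j
    have "(a j)\<^sup>2 = (relu (dotp (\<beta> j) z) - relu (dotp (\<beta>0 j) z))\<^sup>2"
      unfolding a_def using u[of j] by (simp add: power_mult_distrib abs_square_eq_1[symmetric])
    also have "\<dots> \<le> (dotp (\<beta> j) z - dotp (\<beta>0 j) z)\<^sup>2"
      using relu_lipschitz by (metis abs_le_square_iff)
    also have "dotp (\<beta> j) z - dotp (\<beta>0 j) z = dotp (\<lambda>i. \<beta> j i - \<beta>0 j i) z"
      unfolding dotp_def by (simp add: sum_subtractf left_diff_distrib)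
    finally show "(a j)\<^sup>2 \<le> dotp (\<lambda>i. \<beta> j i - \<beta>0 j i) (\<lambda>i. \<beta> j i - \<beta>0 j i)"
      using sq_dotp_le_of_unit[OF z] by (rule order_trans)
  qed
  finally show ?thesis
    unfolding pnorm2_def dotp_self_eq_sum_sq .
qed

lemma sq_nn_le_init:
  assumes "m > 0" "\<And>j. \<bar>u j\<bar> = 1" "dotp z z \<le> 1"
    and R: "pnorm2 m (\<lambda>j i. \<beta> j i - \<beta>0 j i) \<le> R\<^sup>2"
  shows "(nn m u \<beta> z)\<^sup>2 \<le> 2 * (nn m u \<beta>0 z)\<^sup>2 + 2 * R\<^sup>2"
proof -
  have "(nn m u \<beta> z)\<^sup>2 \<le> 2 * (nn m u \<beta>0 z)\<^sup>2 + 2 * (nn m u \<beta> z - nn m u \<beta>0 z)\<^sup>2"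
    using zero_le_power2[of "nn m u \<beta> z - 2 * nn m u \<beta>0 z"]
    by (simp add: power2_eq_square algebra_simps)
  moreover have "(nn m u \<beta> z - nn m u \<beta>0 z)\<^sup>2 \<le> pnorm2 m (\<lambda>j i. \<beta> j i - \<beta>0 j i)"
    by (intro sq_nn_diff_le_pnorm2 assms(1-3))
  ultimately show ?thesis
    using R by linarith
qed

lemma expectation_sq_nn_le_init:
  fixes p :: "'s pmf"
  assumes "m > 0" "\<And>j. \<bar>u j\<bar> = 1" "\<And>x. dotp (\<psi> x) (\<psi> x) \<le> 1" "finite (set_pmf p)"
    and "pnorm2 m (\<lambda>j i. \<beta> j i - \<beta>0 j i) \<le> R\<^sup>2"
  shows "measure_pmf.expectation p (\<lambda>x. (nn m u \<beta> (\<psi> x))\<^sup>2)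
      \<le> 2 * measure_pmf.expectation p (\<lambda>x. (nn m u \<beta>0 (\<psi> x))\<^sup>2) + 2 * R\<^sup>2"
proof -
  have int: "integrable (measure_pmf p) f" for f :: "'s \<Rightarrow> real"
    using assms(4) by (rule integrable_measure_pmf_finite)
  have "measure_pmf.expectation p (\<lambda>x. (nn m u \<beta> (\<psi> x))\<^sup>2)
      \<le> measure_pmf.expectation p (\<lambda>x. 2 * (nn m u \<beta>0 (\<psi> x))\<^sup>2 + 2 * R\<^sup>2)"
    by (intro integral_mono int sq_nn_le_init assms)
  then show ?thesis
    by (simp add: int measure_pmf.prob_space)
qed

lemma pnorm2_grad_nn_le_1:
  assumes m: "m > 0" and u: "\<And>j. \<bar>u j\<bar> = 1" and z: "dotp z z \<le> 1"
  shows "pnorm2 m (grad_nn m u \<beta> z) \<le> 1"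
proof -
  have "(\<Sum>i\<in>UNIV. (grad_nn m u \<beta> z j i)\<^sup>2) = (1 / real m) * (relu' (dotp (\<beta> j) z))\<^sup>2 * dotp z z"
    if "j < m" for j
    using that m u[of j]
    by (simp add: grad_nn_def dotp_self_eq_sum_sq power_mult_distrib power_divide
        abs_square_eq_1[symmetric] sum_distrib_left)
  then have "pnorm2 m (grad_nn m u \<beta> z) = (\<Sum>j<m. (1 / real m) * (relu' (dotp (\<beta> j) z))\<^sup>2 * dotp z z)"
    unfolding pnorm2_def by simp
  also have "\<dots> \<le> (\<Sum>j<m. 1 / real m)"
    using z dotp_self_nonneg[of z] by (intro sum_mono) (auto simp: relu'_def divide_right_mono)
  also have "\<dots> = 1"
    using m by simp
  finally show ?thesis .
qed

lemma pnorm2_gradF_emp_le_1: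
  assumes m: "m > 0" and N: "N > 0" and u: "\<And>j. \<bar>u j\<bar> = 1"
    and z: "\<And>s x a. dotp (\<phi> s x a) (\<phi> s x a) \<le> 1"
  shows "pnorm2 m (gradF_emp m u \<beta> \<phi> s N ss a) \<le> 1"
proof -
  have "pnorm2 m (gradF_emp m u \<beta> \<phi> s N ss a)
      \<le> (\<Sum>j<m. \<Sum>i\<in>UNIV. (1 / real N) * (\<Sum>k<N. (grad_nn m u \<beta> (\<phi> s (ss k) a) j i)\<^sup>2))"
    unfolding pnorm2_def gradF_emp_def by (intro sum_mono sq_mean_le_mean_sq N)
  also have "\<dots> = (1 / real N) * (\<Sum>k<N. pnorm2 m (grad_nn m u \<beta> (\<phi> s (ss k) a)))"
    unfolding pnorm2_def by (simp add: sum_distrib_left sum.swap[of _ "{..<N}"])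
  also have "\<dots> \<le> (1 / real N) * (\<Sum>k<N. 1)"
    by (intro mult_left_mono sum_mono pnorm2_grad_nn_le_1 m u z) auto
  also have "\<dots> = 1"
    using N by simp
  finally show ?thesis .
qed

lemma expectation_pnorm2_gradF_error_le:
  fixes dS :: "'s::finite pmf"
  assumes m: "m > 0" and N: "N > 0" and u: "\<And>j. \<bar>u j\<bar> = 1"
    and z: "\<And>s x a. dotp (\<phi> s x a) (\<phi> s x a) \<le> 1"
  shows "measure_pmf.expectation (samples N dS)
           (\<lambda>ss. pnorm2 m (\<lambda>j i. gradF_emp m u \<beta> \<phi> s N ss a j i - gradF_pop m u \<beta> \<phi> s dS a j i))
         \<le> 1 / real N"
proof -
  have fin: "finite (set_pmf (samples N dS))"
    unfolding samples_def by (intro finite_set_Pi_pmf) auto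
  have int: "integrable (measure_pmf dS) f" for f :: "'s \<Rightarrow> real"
    by (intro integrable_measure_pmf_finite) auto
  have "measure_pmf.expectation (samples N dS)
      (\<lambda>ss. pnorm2 m (\<lambda>j i. gradF_emp m u \<beta> \<phi> s N ss a j i - gradF_pop m u \<beta> \<phi> s dS a j i))
    = (\<Sum>j<m. \<Sum>i\<in>UNIV. measure_pmf.expectation (samples N dS)
        (\<lambda>ss. ((1 / real N) * (\<Sum>k<N. grad_nn m u \<beta> (\<phi> s (ss k) a) j i)
               - measure_pmf.expectation dS (\<lambda>x. grad_nn m u \<beta> (\<phi> s x a) j i))\<^sup>2))"
    unfolding pnorm2_def gradF_emp_def gradF_pop_def
    by (simp add: Bochner_Integration.integral_sum integrable_measure_pmf_finite[OF fin])
  also have "\<dots> \<le> (\<Sum>j<m. \<Sum>i\<in>UNIV.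
      measure_pmf.expectation dS (\<lambda>x. (grad_nn m u \<beta> (\<phi> s x a) j i)\<^sup>2) / real N)"
    by (intro sum_mono expectation_sq_sample_mean_error_le N) auto
  also have "\<dots> = measure_pmf.expectation dS (\<lambda>x. pnorm2 m (grad_nn m u \<beta> (\<phi> s x a))) / real N"
    unfolding pnorm2_def by (simp add: Bochner_Integration.integral_sum int sum_divide_distrib)
  also have "\<dots> \<le> measure_pmf.expectation dS (\<lambda>x. 1) / real N"
    by (intro divide_right_mono integral_mono int pnorm2_grad_nn_le_1 m u z) auto
  finally show ?thesis
    by (simp add: measure_pmf.prob_space)
qed

section \<open>Sampling error of the semi-gradient\<close>

lemma pnorm2_scaled_diff_le:
  "pnorm2 m (\<lambda>j i. a * X j i - b * Y j i)
     \<le> 2 * (a - b)\<^sup>2 * pnorm2 m X + 2 * b\<^sup>2 * pnorm2 m (\<lambda>j i. X j i - Y j i)"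
proof -
  have pointwise: "(a * x - b * y)\<^sup>2 \<le> 2 * (a - b)\<^sup>2 * x\<^sup>2 + 2 * b\<^sup>2 * (x - y)\<^sup>2" for x y :: real
  proof -
    have "a * x - b * y = (a - b) * x + b * (x - y)"
      by (simp add: algebra_simps)
    moreover have "0 \<le> ((a - b) * x - b * (x - y))\<^sup>2"
      by simp
    ultimately show ?thesis
      by (simp add: power2_eq_square algebra_simps)
  qed
  have "pnorm2 m (\<lambda>j i. a * X j i - b * Y j i)
     \<le> (\<Sum>j<m. \<Sum>i\<in>UNIV. 2 * (a - b)\<^sup>2 * (X j i)\<^sup>2 + 2 * b\<^sup>2 * (X j i - Y j i)\<^sup>2)"
    unfolding pnorm2_def by (intro sum_mono pointwise)
  also have "\<dots> = 2 * (a - b)\<^sup>2 * pnorm2 m X + 2 * b\<^sup>2 * pnorm2 m (\<lambda>j i. X j i - Y j i)"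
    unfolding pnorm2_def by (simp add: sum.distrib sum_distrib_left)
  finally show ?thesis .
qed

lemma sq_scaled_le:
  fixes y \<mu> :: real
  assumes "\<bar>\<mu>\<bar> \<le> 1"
  shows "(\<mu> * y)\<^sup>2 \<le> y\<^sup>2"
proof -
  have "\<mu>\<^sup>2 \<le> 1"
    using assms abs_le_square_iff[of \<mu> 1] by simp
  then show ?thesis
    by (simp add: power_mult_distrib mult_left_le_one_le)
qed

lemma sq_diff_scaled_le:
  fixes x y \<mu> :: real
  assumes "\<bar>\<mu>\<bar> \<le> 1"
  shows "(x - \<mu> * y)\<^sup>2 \<le> 2 * x\<^sup>2 + 2 * y\<^sup>2"
proof -
  have "(x - \<mu> * y)\<^sup>2 \<le> 2 * x\<^sup>2 + 2 * (\<mu> * y)\<^sup>2"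
    using zero_le_power2[of "x + \<mu> * y"] by (simp add: power2_eq_square algebra_simps)
  also have "(\<mu> * y)\<^sup>2 \<le> y\<^sup>2"
    using assms by (rule sq_scaled_le)
  finally show ?thesis
    by simp
qed

lemma sq_diff_diff_le:
  fixes p q r :: real
  shows "(p - q - r)\<^sup>2 \<le> 3 * (p\<^sup>2 + q\<^sup>2 + r\<^sup>2)"
  using zero_le_power2[of "p + q"] zero_le_power2[of "p + r"] zero_le_power2[of "q - r"]
  by (simp add: power2_eq_square algebra_simps)

lemma pnorm2_g_error_le:
  fixes \<beta> s dS a s' dS' a' \<xi> and \<tau> :: real
  assumes "m > 0" "N > 0" "\<And>j. \<bar>u j\<bar> = 1" "\<And>s x a. dotp (\<phi> s x a) (\<phi> s x a) \<le> 1"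
    and \<mu>: "\<bar>\<mu>\<bar> \<le> 1"
  defines "\<delta> \<equiv> F_pop m u \<beta> \<phi> s dS a - \<tau> * \<xi> s dS a - \<mu> * F_pop m u \<beta> \<phi> s' dS' a'"
  shows "pnorm2 m (\<lambda>j i. g_emp m u \<beta> \<phi> \<xi> \<tau> \<mu> N s dS ss a s' ss' a' j i
                        - g_pop m u \<beta> \<phi> \<xi> \<tau> \<mu> s dS a s' dS' a' j i)
    \<le> 4 * (F_emp m u \<beta> \<phi> s N ss a - F_pop m u \<beta> \<phi> s dS a)\<^sup>2
      + 4 * (F_emp m u \<beta> \<phi> s' N ss' a' - F_pop m u \<beta> \<phi> s' dS' a')\<^sup>2
      + 2 * \<delta>\<^sup>2 * pnorm2 m (\<lambda>j i. gradF_emp m u \<beta> \<phi> s N ss a j i - gradF_pop m u \<beta> \<phi> s dS a j i)"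
proof -
  define e1 where "e1 = F_emp m u \<beta> \<phi> s N ss a - F_pop m u \<beta> \<phi> s dS a"
  define e2 where "e2 = F_emp m u \<beta> \<phi> s' N ss' a' - F_pop m u \<beta> \<phi> s' dS' a'"
  define \<delta>_emp where
    "\<delta>_emp = F_emp m u \<beta> \<phi> s N ss a - \<tau> * \<xi> s dS a - \<mu> * F_emp m u \<beta> \<phi> s' N ss' a'"
  have "\<delta>_emp - \<delta> = e1 - \<mu> * e2"
    unfolding \<delta>_emp_def \<delta>_def e1_def e2_def by (simp add: algebra_simps)
  then have "(\<delta>_emp - \<delta>)\<^sup>2 \<le> 2 * e1\<^sup>2 + 2 * e2\<^sup>2"
    using sq_diff_scaled_le[OF \<mu>] by simp
  moreover have "pnorm2 m (gradF_emp m u \<beta> \<phi> s N ss a) \<le> 1"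
    by (intro pnorm2_gradF_emp_le_1 assms)
  ultimately have "(\<delta>_emp - \<delta>)\<^sup>2 * pnorm2 m (gradF_emp m u \<beta> \<phi> s N ss a) \<le> 2 * e1\<^sup>2 + 2 * e2\<^sup>2"
    by (meson mult_right_le_one_le order_trans pnorm2_nonneg zero_le_power2)
  moreover have "pnorm2 m (\<lambda>j i. g_emp m u \<beta> \<phi> \<xi> \<tau> \<mu> N s dS ss a s' ss' a' j i
                               - g_pop m u \<beta> \<phi> \<xi> \<tau> \<mu> s dS a s' dS' a' j i)
      \<le> 2 * (\<delta>_emp - \<delta>)\<^sup>2 * pnorm2 m (gradF_emp m u \<beta> \<phi> s N ss a)
        + 2 * \<delta>\<^sup>2 * pnorm2 m (\<lambda>j i. gradF_emp m u \<beta> \<phi> s N ss a j i - gradF_pop m u \<beta> \<phi> s dS a j i)"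
    unfolding g_emp_def g_pop_def Let_def \<delta>_emp_def[symmetric] \<delta>_def[symmetric]
    by (rule pnorm2_scaled_diff_le)
  ultimately show ?thesis
    unfolding e1_def e2_def by linarith
qed

lemma expectation_pnorm2_g_error_le:
  fixes dS dS' :: "'s::finite pmf" and \<beta> s a s' a' \<xi> and \<tau> :: real
  assumes m: "m > 0" and N: "N > 0" and u: "\<And>j. \<bar>u j\<bar> = 1"
    and z: "\<And>s x a. dotp (\<phi> s x a) (\<phi> s x a) \<le> 1" and \<mu>: "\<bar>\<mu>\<bar> \<le> 1"
  defines "\<delta> \<equiv> F_pop m u \<beta> \<phi> s dS a - \<tau> * \<xi> s dS a - \<mu> * F_pop m u \<beta> \<phi> s' dS' a'"
  shows "measure_pmf.expectation (pair_pmf (samples N dS) (samples N dS'))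
           (\<lambda>w. pnorm2 m (\<lambda>j i. g_emp m u \<beta> \<phi> \<xi> \<tau> \<mu> N s dS (fst w) a s' (snd w) a' j i
                                - g_pop m u \<beta> \<phi> \<xi> \<tau> \<mu> s dS a s' dS' a' j i))
    \<le> (4 * measure_pmf.expectation dS (\<lambda>x. (nn m u \<beta> (\<phi> s x a))\<^sup>2)
       + 4 * measure_pmf.expectation dS' (\<lambda>x. (nn m u \<beta> (\<phi> s' x a'))\<^sup>2) + 2 * \<delta>\<^sup>2) / real N"
proof -
  let ?S = "samples N dS" and ?S' = "samples N dS'"
  define A where "A ss = (F_emp m u \<beta> \<phi> s N ss a - F_pop m u \<beta> \<phi> s dS a)\<^sup>2" for ss
  define B where "B ss = (F_emp m u \<beta> \<phi> s' N ss a' - F_pop m u \<beta> \<phi> s' dS' a')\<^sup>2" for ss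
  define D where
    "D ss = pnorm2 m (\<lambda>j i. gradF_emp m u \<beta> \<phi> s N ss a j i - gradF_pop m u \<beta> \<phi> s dS a j i)" for ss
  have fin: "finite (set_pmf (samples N p))" for p :: "'s pmf"
    unfolding samples_def by (intro finite_set_Pi_pmf) auto
  have int: "integrable (measure_pmf (pair_pmf ?S ?S')) f" for f :: "_ \<Rightarrow> real"
    using fin by (intro integrable_measure_pmf_finite) simp
  have "measure_pmf.expectation (pair_pmf ?S ?S')
           (\<lambda>w. pnorm2 m (\<lambda>j i. g_emp m u \<beta> \<phi> \<xi> \<tau> \<mu> N s dS (fst w) a s' (snd w) a' j i
                                - g_pop m u \<beta> \<phi> \<xi> \<tau> \<mu> s dS a s' dS' a' j i))
     \<le> measure_pmf.expectation (pair_pmf ?S ?S') (\<lambda>w. 4 * A (fst w) + 4 * B (snd w) + 2 * \<delta>\<^sup>2 * D (fst w))"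
    unfolding A_def B_def D_def \<delta>_def
    by (intro integral_mono int pnorm2_g_error_le m N u z \<mu>)
  also have "\<dots> = 4 * measure_pmf.expectation ?S A + 4 * measure_pmf.expectation ?S' B
                 + 2 * \<delta>\<^sup>2 * measure_pmf.expectation ?S D"
    by (simp add: int)
  also have "\<dots> \<le> 4 * (measure_pmf.expectation dS (\<lambda>x. (nn m u \<beta> (\<phi> s x a))\<^sup>2) / real N)
                 + 4 * (measure_pmf.expectation dS' (\<lambda>x. (nn m u \<beta> (\<phi> s' x a'))\<^sup>2) / real N)
                 + 2 * \<delta>\<^sup>2 * (1 / real N)"
    unfolding A_def B_def D_def F_emp_def F_pop_def
    by (intro add_mono mult_left_mono expectation_sq_sample_mean_error_le
        expectation_pnorm2_gradF_error_le m N u z) auto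
  finally show ?thesis
    by (simp add: add_divide_distrib)
qed

lemma expectation_pnorm2_g_error_le_init:
  fixes dS dS' :: "'s::finite pmf"
  assumes m: "m > 0" and N: "N > 0" and u: "\<And>j. \<bar>u j\<bar> = 1"
    and z: "\<And>s x a. dotp (\<phi> s x a) (\<phi> s x a) \<le> 1" and \<mu>: "\<bar>\<mu>\<bar> \<le> 1"
    and R: "pnorm2 m (\<lambda>j i. \<beta> j i - \<beta>0 j i) \<le> R\<^sup>2"
  shows "measure_pmf.expectation (pair_pmf (samples N dS) (samples N dS'))
           (\<lambda>w. pnorm2 m (\<lambda>j i. g_emp m u \<beta> \<phi> \<xi> \<tau> \<mu> N s dS (fst w) a s' (snd w) a' j i
                                - g_pop m u \<beta> \<phi> \<xi> \<tau> \<mu> s dS a s' dS' a' j i))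
    \<le> (20 * measure_pmf.expectation dS (\<lambda>x. (nn m u \<beta>0 (\<phi> s x a))\<^sup>2)
       + 20 * measure_pmf.expectation dS' (\<lambda>x. (nn m u \<beta>0 (\<phi> s' x a'))\<^sup>2)
       + 40 * R\<^sup>2 + 6 * \<tau>\<^sup>2 * (\<xi> s dS a)\<^sup>2) / real N"
proof -
  define P1 where "P1 = measure_pmf.expectation dS (\<lambda>x. (nn m u \<beta> (\<phi> s x a))\<^sup>2)"
  define P2 where "P2 = measure_pmf.expectation dS' (\<lambda>x. (nn m u \<beta> (\<phi> s' x a'))\<^sup>2)"
  define Q1 where "Q1 = measure_pmf.expectation dS (\<lambda>x. (nn m u \<beta>0 (\<phi> s x a))\<^sup>2)"
  define Q2 where "Q2 = measure_pmf.expectation dS' (\<lambda>x. (nn m u \<beta>0 (\<phi> s' x a'))\<^sup>2)"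
  have "(F_pop m u \<beta> \<phi> s dS a - \<tau> * \<xi> s dS a - \<mu> * F_pop m u \<beta> \<phi> s' dS' a')\<^sup>2
      \<le> 3 * ((F_pop m u \<beta> \<phi> s dS a)\<^sup>2 + (\<tau> * \<xi> s dS a)\<^sup>2 + (\<mu> * F_pop m u \<beta> \<phi> s' dS' a')\<^sup>2)"
    by (rule sq_diff_diff_le)
  also have "\<dots> \<le> 3 * (P1 + \<tau>\<^sup>2 * (\<xi> s dS a)\<^sup>2 + P2)"
  proof -
    have "(\<mu> * F_pop m u \<beta> \<phi> s' dS' a')\<^sup>2 \<le> (F_pop m u \<beta> \<phi> s' dS' a')\<^sup>2"
      using \<mu> by (rule sq_scaled_le)
    moreover have "(F_pop m u \<beta> \<phi> s dS a)\<^sup>2 \<le> P1" "(F_pop m u \<beta> \<phi> s' dS' a')\<^sup>2 \<le> P2"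
      unfolding F_pop_def P1_def P2_def by (auto intro!: sq_expectation_le_second_moment)
    ultimately show ?thesis
      by (simp add: power_mult_distrib)
  qed
  finally have \<delta>: "(F_pop m u \<beta> \<phi> s dS a - \<tau> * \<xi> s dS a - \<mu> * F_pop m u \<beta> \<phi> s' dS' a')\<^sup>2
      \<le> 3 * (P1 + \<tau>\<^sup>2 * (\<xi> s dS a)\<^sup>2 + P2)" .
  have "P1 \<le> 2 * Q1 + 2 * R\<^sup>2" "P2 \<le> 2 * Q2 + 2 * R\<^sup>2"
    unfolding P1_def P2_def Q1_def Q2_def using z by (auto intro!: expectation_sq_nn_le_init m u R)
  with \<delta> have bound: "4 * P1 + 4 * P2
        + 2 * (F_pop m u \<beta> \<phi> s dS a - \<tau> * \<xi> s dS a - \<mu> * F_pop m u \<beta> \<phi> s' dS' a')\<^sup>2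
      \<le> 20 * Q1 + 20 * Q2 + 40 * R\<^sup>2 + 6 * (\<tau>\<^sup>2 * (\<xi> s dS a)\<^sup>2)"
    by argo
  have "measure_pmf.expectation (pair_pmf (samples N dS) (samples N dS'))
           (\<lambda>w. pnorm2 m (\<lambda>j i. g_emp m u \<beta> \<phi> \<xi> \<tau> \<mu> N s dS (fst w) a s' (snd w) a' j i
                                - g_pop m u \<beta> \<phi> \<xi> \<tau> \<mu> s dS a s' dS' a' j i))
    \<le> (4 * P1 + 4 * P2
        + 2 * (F_pop m u \<beta> \<phi> s dS a - \<tau> * \<xi> s dS a - \<mu> * F_pop m u \<beta> \<phi> s' dS' a')\<^sup>2) / real N"
    unfolding P1_def P2_def by (rule expectation_pnorm2_g_error_le[OF m N u z \<mu>])
  also have "\<dots> \<le> (20 * Q1 + 20 * Q2 + 40 * R\<^sup>2 + 6 * (\<tau>\<^sup>2 * (\<xi> s dS a)\<^sup>2)) / real N"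
    using bound by (intro divide_right_mono) auto
  finally show ?thesis
    unfolding Q1_def Q2_def by (simp add: mult.assoc)
qed

section \<open>Averaging over the initialisation\<close>

lemma nn_integral_PiM_component:
  assumes M: "\<And>i. i \<in> I \<Longrightarrow> prob_space (M i)" and i: "i \<in> I"
    and f: "f \<in> borel_measurable (M i)"
  shows "(\<integral>\<^sup>+\<omega>. f (\<omega> i) \<partial>Pi\<^sub>M I M) = (\<integral>\<^sup>+x. f x \<partial>M i)"
proof -
  have "(\<integral>\<^sup>+\<omega>. f (\<omega> i) \<partial>Pi\<^sub>M I M) = (\<integral>\<^sup>+x. f x \<partial>distr (Pi\<^sub>M I M) (M i) (\<lambda>\<omega>. \<omega> i))"
    using i f by (subst nn_integral_distr) auto
  also have "\<dots> = (\<integral>\<^sup>+x. f x \<partial>M i)"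
    using M i by (subst distr_PiM_component) auto
  finally show ?thesis .
qed

lemma nn_integral_normal_density_sq:
  assumes "\<sigma> > 0"
  shows "(\<integral>\<^sup>+x. ennreal (x\<^sup>2) \<partial>density lborel (normal_density 0 \<sigma>)) = ennreal (\<sigma>\<^sup>2)"
proof -
  have moment: "has_bochner_integral lborel (\<lambda>x. normal_density 0 \<sigma> x * x\<^sup>2) (\<sigma>\<^sup>2)"
    using normal_moment_even[OF assms, of 0 1] by simp
  have "(\<integral>\<^sup>+x. ennreal (x\<^sup>2) \<partial>density lborel (normal_density 0 \<sigma>))
      = (\<integral>\<^sup>+x. ennreal (normal_density 0 \<sigma> x * x\<^sup>2) \<partial>lborel)"
    by (subst nn_integral_density) (auto simp: ennreal_mult normal_density_nonneg)
  also have "\<dots> = ennreal (\<sigma>\<^sup>2)"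
    using moment by (subst nn_integral_eq_integral) (auto simp: has_bochner_integral_iff)
  finally show ?thesis .
qed

lemma prob_space_gauss_init: "prob_space (gauss_init m :: 'd::finite param measure)"
  unfolding gauss_init_def by (intro prob_space_PiM prob_space_normal_density) simp

lemma nn_integral_gauss_init_sq_coordinate:
  assumes "j < m"
  shows "(\<integral>\<^sup>+\<beta>0. ennreal ((\<beta>0 j i)\<^sup>2) \<partial>(gauss_init m :: 'd::finite param measure))
       = ennreal (1 / real CARD('d))"
proof -
  let ?G = "density lborel (normal_density 0 (1 / sqrt (real CARD('d))))"
  let ?row = "Pi\<^sub>M (UNIV :: 'd set) (\<lambda>_. ?G)"
  have G: "prob_space ?G"
    by (rule prob_space_normal_density) simp
  have "(\<integral>\<^sup>+\<beta>0. ennreal ((\<beta>0 j i)\<^sup>2) \<partial>(gauss_init m :: 'd param measure))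
      = (\<integral>\<^sup>+r. ennreal ((r i)\<^sup>2) \<partial>?row)"
    unfolding gauss_init_def using assms G
    by (subst nn_integral_PiM_component[where f = "\<lambda>r. ennreal ((r i)\<^sup>2)"])
      (auto intro: prob_space_PiM)
  also have "\<dots> = (\<integral>\<^sup>+x. ennreal (x\<^sup>2) \<partial>?G)"
    using G by (subst nn_integral_PiM_component) auto
  also have "\<dots> = ennreal (1 / real CARD('d))"
    by (subst nn_integral_normal_density_sq) (auto simp: power_one_over)
  finally show ?thesis .
qed

lemma gauss_init_coordinate_measurable [measurable]:
  assumes "j < m"
  shows "(\<lambda>\<beta>0. \<beta>0 j i) \<in> borel_measurable (gauss_init m :: 'd::finite param measure)"
proof -
  let ?row = "Pi\<^sub>M (UNIV :: 'd set) (\<lambda>_. borel :: real measure)"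
  have "(\<lambda>\<beta>0. \<beta>0 j) \<in> measurable (Pi\<^sub>M {..<m} (\<lambda>_. ?row)) ?row"
    using assms by (intro measurable_component_singleton) auto
  moreover have "(\<lambda>r. r i) \<in> borel_measurable ?row"
    by (intro measurable_component_singleton) auto
  ultimately have comp: "(\<lambda>\<beta>0. \<beta>0 j i) \<in> borel_measurable (Pi\<^sub>M {..<m} (\<lambda>_. ?row))"
    by (rule measurable_compose)
  have sets_eq: "sets (gauss_init m :: 'd param measure) = sets (Pi\<^sub>M {..<m} (\<lambda>_. ?row))"
    unfolding gauss_init_def by (intro sets_PiM_cong) auto
  from comp show ?thesis
    unfolding measurable_cong_sets[OF sets_eq refl] .
qed

lemma nn_integral_gauss_init_pnorm2:
  "(\<integral>\<^sup>+\<beta>0. ennreal (pnorm2 m \<beta>0) \<partial>(gauss_init m :: 'd::finite param measure)) = ennreal (real m)"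
proof -
  have "(\<integral>\<^sup>+\<beta>0. ennreal (pnorm2 m \<beta>0) \<partial>(gauss_init m :: 'd param measure))
      = (\<integral>\<^sup>+\<beta>0. (\<Sum>j<m. \<Sum>i\<in>UNIV. ennreal ((\<beta>0 j i)\<^sup>2)) \<partial>(gauss_init m :: 'd param measure))"
    unfolding pnorm2_def by (intro nn_integral_cong) (simp add: sum_nonneg)
  also have "\<dots> = (\<Sum>j<m. \<integral>\<^sup>+\<beta>0. (\<Sum>i\<in>UNIV. ennreal ((\<beta>0 j i)\<^sup>2)) \<partial>(gauss_init m :: 'd param measure))"
    by (rule nn_integral_sum) measurable
  also have "\<dots> = (\<Sum>j<m. \<Sum>i\<in>UNIV. \<integral>\<^sup>+\<beta>0. ennreal ((\<beta>0 j i)\<^sup>2) \<partial>(gauss_init m :: 'd param measure))"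
    by (intro sum.cong refl nn_integral_sum) measurable
  also have "\<dots> = (\<Sum>j<m. \<Sum>i\<in>(UNIV :: 'd set). ennreal (1 / real CARD('d)))"
    by (simp add: nn_integral_gauss_init_sq_coordinate)
  also have "\<dots> = ennreal (real m)"
    by (simp add: ennreal_of_nat_eq_real_of_nat ennreal_mult[symmetric])
  finally show ?thesis .
qed

lemma finite_set_u_init: "finite (set_pmf (u_init m))"
  unfolding u_init_def by (intro finite_set_Pi_pmf) auto

lemma abs_u_init_support:
  assumes "u \<in> set_pmf (u_init m)"
  shows "\<bar>u j\<bar> = 1"
  using assms unfolding u_init_def set_Pi_pmf[OF finite_lessThan]
  by (cases "j < m") (auto simp: PiE_dflt_def)

lemma expectation_u_init_sq_sum:
  "measure_pmf.expectation (u_init m) (\<lambda>u. (\<Sum>j<m. u j * r j)\<^sup>2) = (\<Sum>j<m. (r j)\<^sup>2)"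
proof -
  have "measure_pmf.expectation (u_init m) (\<lambda>u. (\<Sum>j<m. u j * r j)\<^sup>2)
      = (\<Sum>j<m. measure_pmf.expectation (pmf_of_set {-1, 1 :: real}) (\<lambda>v. (v * r j)\<^sup>2))"
    unfolding u_init_def
    by (rule expectation_Pi_pmf_sq_sum_centred) (auto simp: integral_pmf_of_set)
  also have "\<dots> = (\<Sum>j<m. (r j)\<^sup>2)"
    by (simp add: integral_pmf_of_set power2_eq_square)
  finally show ?thesis .
qed

lemma expectation_u_init_sq_nn_le:
  assumes "dotp z z \<le> 1"
  shows "measure_pmf.expectation (u_init m) (\<lambda>u. (nn m u \<beta>0 z)\<^sup>2) \<le> pnorm2 m \<beta>0 / real m"
proof -
  have "measure_pmf.expectation (u_init m) (\<lambda>u. (nn m u \<beta>0 z)\<^sup>2)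
      = measure_pmf.expectation (u_init m) (\<lambda>u. (\<Sum>j<m. u j * relu (dotp (\<beta>0 j) z))\<^sup>2) / real m"
    unfolding nn_def by (simp add: power_mult_distrib power_divide)
  also have "\<dots> = (\<Sum>j<m. (relu (dotp (\<beta>0 j) z))\<^sup>2) / real m"
    by (simp add: expectation_u_init_sq_sum)
  also have "\<dots> \<le> pnorm2 m \<beta>0 / real m"
    unfolding pnorm2_def dotp_self_eq_sum_sq[symmetric]
    using order_trans[OF sq_relu_le sq_dotp_le_of_unit[OF assms]]
    by (intro divide_right_mono sum_mono) auto
  finally show ?thesis .
qed

lemma nn_gauss_init_measurable [measurable]:
  "(\<lambda>\<beta>0. nn m u \<beta>0 z) \<in> borel_measurable (gauss_init m :: 'd::finite param measure)"
  unfolding nn_def relu_def dotp_def by measurable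

lemma expectation_sq_nn_gauss_init_measurable:
  assumes "finite (set_pmf d)"
  shows "(\<lambda>\<beta>0. measure_pmf.expectation d (\<lambda>x. (nn m u \<beta>0 (\<psi> x))\<^sup>2))
           \<in> borel_measurable (gauss_init m :: 'd::finite param measure)"
proof -
  have sum: "(\<lambda>\<beta>0. measure_pmf.expectation d (\<lambda>x. (nn m u \<beta>0 (\<psi> x))\<^sup>2))
      = (\<lambda>\<beta>0. \<Sum>x\<in>set_pmf d. (nn m u \<beta>0 (\<psi> x))\<^sup>2 * pmf d x)"
    using assms by (intro ext integral_measure_pmf_real) auto
  show ?thesis
    unfolding sum by measurable
qed

lemma nn_integral_measure_pmf_swap:
  fixes f :: "'a \<Rightarrow> 'b \<Rightarrow> ennreal"
  assumes fin: "finite (set_pmf p)" and f: "\<And>u. f u \<in> borel_measurable M"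
  shows "(\<integral>\<^sup>+u. \<integral>\<^sup>+b. f u b \<partial>M \<partial>measure_pmf p) = (\<integral>\<^sup>+b. \<integral>\<^sup>+u. f u b \<partial>measure_pmf p \<partial>M)"
proof -
  have "(\<integral>\<^sup>+u. \<integral>\<^sup>+b. f u b \<partial>M \<partial>measure_pmf p) = (\<Sum>u\<in>set_pmf p. (\<integral>\<^sup>+b. f u b \<partial>M) * pmf p u)"
    using fin by (rule nn_integral_measure_pmf_finite) simp
  also have "\<dots> = (\<Sum>u\<in>set_pmf p. \<integral>\<^sup>+b. f u b * pmf p u \<partial>M)"
    using f by (simp add: nn_integral_multc)
  also have "\<dots> = (\<integral>\<^sup>+b. (\<Sum>u\<in>set_pmf p. f u b * pmf p u) \<partial>M)"
    using f by (intro nn_integral_sum[symmetric]) auto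
  also have "\<dots> = (\<integral>\<^sup>+b. \<integral>\<^sup>+u. f u b \<partial>measure_pmf p \<partial>M)"
    using fin by (intro nn_integral_cong nn_integral_measure_pmf_finite[symmetric]) simp_all
  finally show ?thesis .
qed

text \<open>The random signs \<open>u\<close> decorrelate the neurons, and \<open>E \<parallel>\<beta>\<^sub>j(0)\<parallel>\<^sup>2 = 1\<close>.\<close>
lemma nn_integral_init_second_moment_le_1:
  fixes d :: "'s pmf" and \<psi> :: "'s \<Rightarrow> 'd::finite \<Rightarrow> real"
  assumes m: "m > 0" and d: "finite (set_pmf d)" and \<psi>: "\<And>x. dotp (\<psi> x) (\<psi> x) \<le> 1"
  shows "(\<integral>\<^sup>+u. \<integral>\<^sup>+\<beta>0. ennreal (measure_pmf.expectation d (\<lambda>x. (nn m u \<beta>0 (\<psi> x))\<^sup>2))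
            \<partial>(gauss_init m :: 'd param measure) \<partial>measure_pmf (u_init m)) \<le> 1"
proof -
  let ?G = "gauss_init m :: 'd param measure"
  define Q where "Q u \<beta>0 = measure_pmf.expectation d (\<lambda>x. (nn m u \<beta>0 (\<psi> x))\<^sup>2)" for u \<beta>0
  have Q_sum: "Q u \<beta>0 = (\<Sum>x\<in>set_pmf d. (nn m u \<beta>0 (\<psi> x))\<^sup>2 * pmf d x)" for u \<beta>0
    unfolding Q_def using d by (rule integral_measure_pmf_real) simp
  have Q_nonneg: "0 \<le> Q u \<beta>0" for u \<beta>0
    unfolding Q_def by (intro integral_nonneg_AE) auto
  have "(\<integral>\<^sup>+u. \<integral>\<^sup>+\<beta>0. ennreal (Q u \<beta>0) \<partial>?G \<partial>measure_pmf (u_init m))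
      = (\<integral>\<^sup>+\<beta>0. \<integral>\<^sup>+u. ennreal (Q u \<beta>0) \<partial>measure_pmf (u_init m) \<partial>?G)"
    unfolding Q_def using expectation_sq_nn_gauss_init_measurable[OF d]
    by (intro nn_integral_measure_pmf_swap finite_set_u_init) simp
  also have "\<dots> \<le> (\<integral>\<^sup>+\<beta>0. ennreal (pnorm2 m \<beta>0 / real m) \<partial>?G)"
  proof (intro nn_integral_mono)
    fix \<beta>0 :: "'d param"
    have "(\<integral>\<^sup>+u. ennreal (Q u \<beta>0) \<partial>measure_pmf (u_init m))
        = ennreal (measure_pmf.expectation (u_init m) (\<lambda>u. Q u \<beta>0))"
      using Q_nonneg
      by (intro nn_integral_eq_integral integrable_measure_pmf_finite finite_set_u_init) auto
    also have "measure_pmf.expectation (u_init m) (\<lambda>u. Q u \<beta>0)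
        = (\<Sum>x\<in>set_pmf d. measure_pmf.expectation (u_init m) (\<lambda>u. (nn m u \<beta>0 (\<psi> x))\<^sup>2) * pmf d x)"
      unfolding Q_sum
      by (simp add: Bochner_Integration.integral_sum integrable_measure_pmf_finite finite_set_u_init)
    also have "\<dots> \<le> (\<Sum>x\<in>set_pmf d. pnorm2 m \<beta>0 / real m * pmf d x)"
      by (intro sum_mono mult_right_mono expectation_u_init_sq_nn_le \<psi>) auto
    also have "\<dots> = pnorm2 m \<beta>0 / real m"
      unfolding sum_distrib_left[symmetric] sum_pmf_eq_1[OF d order_refl] by simp
    finally show "(\<integral>\<^sup>+u. ennreal (Q u \<beta>0) \<partial>measure_pmf (u_init m)) \<le> ennreal (pnorm2 m \<beta>0 / real m)"
      by (simp add: ennreal_leI)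
  qed
  also have "\<dots> = (\<integral>\<^sup>+\<beta>0. ennreal (1 / real m) * ennreal (pnorm2 m \<beta>0) \<partial>?G)"
    by (intro nn_integral_cong) (simp add: ennreal_mult[symmetric] pnorm2_nonneg)
  also have "\<dots> = ennreal (1 / real m) * (\<integral>\<^sup>+\<beta>0. ennreal (pnorm2 m \<beta>0) \<partial>?G)"
    by (rule nn_integral_cmult) (unfold pnorm2_def, measurable)
  also have "\<dots> = 1"
    using m by (simp add: nn_integral_gauss_init_pnorm2 ennreal_mult[symmetric])
  finally show ?thesis
    unfolding Q_def .
qed

lemma nn_integral_pmf_prob_space_affine:
  fixes f g :: "'a \<Rightarrow> 'b \<Rightarrow> ennreal"
  assumes M: "prob_space M" and f: "\<And>u. f u \<in> borel_measurable M" and g: "\<And>u. g u \<in> borel_measurable M"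
  shows "(\<integral>\<^sup>+u. \<integral>\<^sup>+b. k * f u b + k * g u b + c \<partial>M \<partial>measure_pmf p)
       = k * (\<integral>\<^sup>+u. \<integral>\<^sup>+b. f u b \<partial>M \<partial>measure_pmf p)
         + k * (\<integral>\<^sup>+u. \<integral>\<^sup>+b. g u b \<partial>M \<partial>measure_pmf p) + c"
proof -
  have "(\<integral>\<^sup>+b. k * f u b + k * g u b + c \<partial>M)
      = k * (\<integral>\<^sup>+b. f u b \<partial>M) + k * (\<integral>\<^sup>+b. g u b \<partial>M) + c" for u
    using f[of u] g[of u]
    by (simp add: nn_integral_add nn_integral_cmult prob_space.emeasure_space_1[OF M])
  then show ?thesis
    by (simp add: nn_integral_add nn_integral_cmult measure_pmf.emeasure_space_1)
qed

lemma nn_integral_pnorm2_g_error_le_init: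
  fixes dS dS' :: "'s::finite pmf"
  assumes "m > 0" "N > 0" "\<And>j. \<bar>u j\<bar> = 1" "\<And>s x a. dotp (\<phi> s x a) (\<phi> s x a) \<le> 1"
    and "\<bar>\<mu>\<bar> \<le> 1" "pnorm2 m (\<lambda>j i. \<beta> j i - \<beta>0 j i) \<le> R\<^sup>2"
  shows "(\<integral>\<^sup>+ w. ennreal (pnorm2 m (\<lambda>j i.
                g_emp m u \<beta> \<phi> \<xi> \<tau> \<mu> N s dS (fst w) a s' (snd w) a' j i
              - g_pop m u \<beta> \<phi> \<xi> \<tau> \<mu> s dS a s' dS' a' j i))
          \<partial>measure_pmf (pair_pmf (samples N dS) (samples N dS')))
    \<le> ennreal (20 / real N) * ennreal (measure_pmf.expectation dS (\<lambda>x. (nn m u \<beta>0 (\<phi> s x a))\<^sup>2))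
      + ennreal (20 / real N) * ennreal (measure_pmf.expectation dS' (\<lambda>x. (nn m u \<beta>0 (\<phi> s' x a'))\<^sup>2))
      + ennreal ((40 * R\<^sup>2 + 6 * \<tau>\<^sup>2 * (\<xi> s dS a)\<^sup>2) / real N)"
    (is "?error \<le> ennreal _ * ennreal ?Q1 + ennreal _ * ennreal ?Q2 + _")
proof -
  have "finite (set_pmf (pair_pmf (samples N dS) (samples N dS')))"
    by (simp add: samples_def finite_set_Pi_pmf)
  then have "?error \<le> ennreal ((20 * ?Q1 + 20 * ?Q2 + 40 * R\<^sup>2 + 6 * \<tau>\<^sup>2 * (\<xi> s dS a)\<^sup>2) / real N)"
    by (subst nn_integral_eq_integral)
      (auto intro!: integrable_measure_pmf_finite ennreal_leI pnorm2_nonneg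
        expectation_pnorm2_g_error_le_init assms)
  moreover have "0 \<le> ?Q1" "0 \<le> ?Q2"
    by (auto intro!: integral_nonneg_AE)
  ultimately show ?thesis
    by (simp add: ennreal_mult[symmetric] ennreal_plus[symmetric] add_divide_distrib add.assoc
        del: ennreal_plus)
qed

lemma le_of_ennreal_le_init_second_moment:
  fixes d :: "'s pmf" and \<psi> :: "'s \<Rightarrow> 'd::finite \<Rightarrow> real"
  assumes "m > 0" "finite (set_pmf d)" "\<And>x. dotp (\<psi> x) (\<psi> x) \<le> 1" and t: "t \<ge> 0" and c: "c \<ge> 0"
    and y: "ennreal y \<le> ennreal t * (\<integral>\<^sup>+u. \<integral>\<^sup>+\<beta>0. ennreal (measure_pmf.expectation d
                 (\<lambda>x. (nn m u \<beta>0 (\<psi> x))\<^sup>2)) \<partial>gauss_init m \<partial>measure_pmf (u_init m)) + ennreal c"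
  shows "y \<le> t + c"
proof -
  note y
  also have "ennreal t * (\<integral>\<^sup>+u. \<integral>\<^sup>+\<beta>0. ennreal (measure_pmf.expectation d
                 (\<lambda>x. (nn m u \<beta>0 (\<psi> x))\<^sup>2)) \<partial>gauss_init m \<partial>measure_pmf (u_init m)) + ennreal c
      \<le> ennreal t * 1 + ennreal c"
    by (intro add_right_mono mult_left_mono nn_integral_init_second_moment_le_1 assms(1-3)) simp
  finally show ?thesis
    using t c by (cases "y \<ge> 0") (simp_all add: ennreal_plus[symmetric] del: ennreal_plus)
qed

lemma error_constant_le:
  fixes R X \<tau> \<tau>\<^sub>1 \<tau>\<^sub>2 \<tau>\<^sub>3 :: real
  assumes R: "1 \<le> R" and \<tau>: "\<tau>\<^sub>1 \<ge> 0" "\<tau>\<^sub>3 \<ge> 0" and X: "X \<le> \<tau>\<^sub>1 + (\<tau>\<^sub>2 * R\<^sup>2 + \<tau>\<^sub>3)"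
  shows "40 + 40 * R\<^sup>2 + 6 * \<tau>\<^sup>2 * X \<le> (80 + 6 * \<tau>\<^sup>2 * (\<tau>\<^sub>1 + \<tau>\<^sub>2 + \<tau>\<^sub>3)) * R\<^sup>2"
proof -
  have "1 \<le> R\<^sup>2"
    using R by (simp add: one_le_power)
  then have le: "x \<le> x * R\<^sup>2" if "0 \<le> x" for x :: real
    using mult_left_mono[OF _ that] by fastforce
  have "40 \<le> 40 * R\<^sup>2" "6 * \<tau>\<^sup>2 * \<tau>\<^sub>1 \<le> 6 * \<tau>\<^sup>2 * \<tau>\<^sub>1 * R\<^sup>2" "6 * \<tau>\<^sup>2 * \<tau>\<^sub>3 \<le> 6 * \<tau>\<^sup>2 * \<tau>\<^sub>3 * R\<^sup>2"
    using \<tau> by (intro le; simp)+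
  moreover have "6 * \<tau>\<^sup>2 * X \<le> 6 * \<tau>\<^sup>2 * (\<tau>\<^sub>1 + (\<tau>\<^sub>2 * R\<^sup>2 + \<tau>\<^sub>3))"
    using X by (intro mult_left_mono) auto
  ultimately show ?thesis
    by (simp add: algebra_simps)
qed

lemma nn_integral_sample_gradient_error_le:
  fixes \<phi> :: "'s::finite \<Rightarrow> 's \<Rightarrow> 'a \<Rightarrow> 'd::finite \<Rightarrow> real"
    and \<beta> :: "(nat \<Rightarrow> real) \<Rightarrow> 'd param \<Rightarrow> 'd param"
    and \<mu> \<tau> \<tau>\<^sub>1 \<tau>\<^sub>2 \<tau>\<^sub>3 :: real
  assumes \<mu>: "\<bar>\<mu>\<bar> \<le> 1" and \<tau>: "\<tau>\<^sub>1 \<ge> 0" "\<tau>\<^sub>2 \<ge> 0" "\<tau>\<^sub>3 \<ge> 0"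
    and m: "m > 0" and N: "N > 0" and R: "1 \<le> R"
    and z: "\<And>s x a. dotp (\<phi> s x a) (\<phi> s x a) \<le> 1"
    and \<xi>: "ennreal ((\<xi> s dS a)\<^sup>2) \<le>
           ennreal \<tau>\<^sub>1 * (\<integral>\<^sup>+ u. \<integral>\<^sup>+ \<beta>0. ennreal (measure_pmf.expectation dS
                 (\<lambda>x. (nn m u \<beta>0 (\<phi> s x a))\<^sup>2)) \<partial>gauss_init m \<partial>measure_pmf (u_init m))
           + ennreal (\<tau>\<^sub>2 * R\<^sup>2 + \<tau>\<^sub>3)"
    and \<beta>: "\<And>u \<beta>0. pnorm2 m (\<lambda>j i. \<beta> u \<beta>0 j i - \<beta>0 j i) \<le> R\<^sup>2"
  shows "(\<integral>\<^sup>+ u. \<integral>\<^sup>+ \<beta>0. \<integral>\<^sup>+ w.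
            ennreal (pnorm2 m (\<lambda>j i.
                g_emp m u (\<beta> u \<beta>0) \<phi> \<xi> \<tau> \<mu> N s dS (fst w) a s' (snd w) a' j i
              - g_pop m u (\<beta> u \<beta>0) \<phi> \<xi> \<tau> \<mu> s dS a s' dS' a' j i))
          \<partial>measure_pmf (pair_pmf (samples N dS) (samples N dS'))
          \<partial>gauss_init m \<partial>measure_pmf (u_init m))
        \<le> ennreal ((80 + 6 * \<tau>\<^sup>2 * (\<tau>\<^sub>1 + \<tau>\<^sub>2 + \<tau>\<^sub>3)) * R\<^sup>2 / real N)"
  (is "?error \<le> _")
proof -
  let ?G = "gauss_init m :: 'd param measure" and ?U = "measure_pmf (u_init m)"
  define Q1 where "Q1 u \<beta>0 = measure_pmf.expectation dS (\<lambda>x. (nn m u \<beta>0 (\<phi> s x a))\<^sup>2)" for u \<beta>0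
  define Q2 where "Q2 u \<beta>0 = measure_pmf.expectation dS' (\<lambda>x. (nn m u \<beta>0 (\<phi> s' x a'))\<^sup>2)" for u \<beta>0
  define c where "c = (40 * R\<^sup>2 + 6 * \<tau>\<^sup>2 * (\<xi> s dS a)\<^sup>2) / real N"
  have Q_measurable: "(\<lambda>\<beta>0. Q1 u \<beta>0) \<in> borel_measurable ?G" "(\<lambda>\<beta>0. Q2 u \<beta>0) \<in> borel_measurable ?G"
    for u unfolding Q1_def Q2_def by (auto intro!: expectation_sq_nn_gauss_init_measurable)
  have Q_init: "(\<integral>\<^sup>+u. \<integral>\<^sup>+\<beta>0. ennreal (Q1 u \<beta>0) \<partial>?G \<partial>?U) \<le> 1"
    "(\<integral>\<^sup>+u. \<integral>\<^sup>+\<beta>0. ennreal (Q2 u \<beta>0) \<partial>?G \<partial>?U) \<le> 1"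
    unfolding Q1_def Q2_def using z by (auto intro!: nn_integral_init_second_moment_le_1 m)
  have "(\<xi> s dS a)\<^sup>2 \<le> \<tau>\<^sub>1 + (\<tau>\<^sub>2 * R\<^sup>2 + \<tau>\<^sub>3)"
    by (rule le_of_ennreal_le_init_second_moment[OF m _ _ _ _ \<xi>]) (use \<tau> z in auto)
  then have "40 + 40 * R\<^sup>2 + 6 * \<tau>\<^sup>2 * (\<xi> s dS a)\<^sup>2 \<le> (80 + 6 * \<tau>\<^sup>2 * (\<tau>\<^sub>1 + \<tau>\<^sub>2 + \<tau>\<^sub>3)) * R\<^sup>2"
    by (rule error_constant_le[OF R \<tau>(1,3)])
  then have final_constant: "40 / real N + c \<le> (80 + 6 * \<tau>\<^sup>2 * (\<tau>\<^sub>1 + \<tau>\<^sub>2 + \<tau>\<^sub>3)) * R\<^sup>2 / real N"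
    unfolding c_def by (simp add: add_divide_distrib[symmetric] divide_right_mono)
  have "?error \<le> (\<integral>\<^sup>+u. \<integral>\<^sup>+\<beta>0. ennreal (20 / real N) * ennreal (Q1 u \<beta>0)
      + ennreal (20 / real N) * ennreal (Q2 u \<beta>0) + ennreal c \<partial>?G \<partial>?U)"
    unfolding Q1_def Q2_def c_def
    by (rule nn_integral_mono_AE, rule AE_pmfI, rule nn_integral_mono,
        rule nn_integral_pnorm2_g_error_le_init[OF m N _ z \<mu> \<beta>], erule abs_u_init_support)
  also have "\<dots> = ennreal (20 / real N) * (\<integral>\<^sup>+u. \<integral>\<^sup>+\<beta>0. ennreal (Q1 u \<beta>0) \<partial>?G \<partial>?U)
      + ennreal (20 / real N) * (\<integral>\<^sup>+u. \<integral>\<^sup>+\<beta>0. ennreal (Q2 u \<beta>0) \<partial>?G \<partial>?U) + ennreal c"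
    using Q_measurable by (intro nn_integral_pmf_prob_space_affine prob_space_gauss_init) auto
  also have "\<dots> \<le> ennreal (20 / real N) * 1 + ennreal (20 / real N) * 1 + ennreal c"
    by (intro add_mono mult_left_mono Q_init order_refl) simp_all
  also have "\<dots> = ennreal (40 / real N + c)"
    unfolding c_def by (simp add: ennreal_plus[symmetric] del: ennreal_plus)
  also have "\<dots> \<le> ennreal ((80 + 6 * \<tau>\<^sup>2 * (\<tau>\<^sub>1 + \<tau>\<^sub>2 + \<tau>\<^sub>3)) * R\<^sup>2 / real N)"
    using final_constant by (rule ennreal_leI)
  finally show ?thesis .
qed

theorem lemma7:
  fixes \<tau> \<mu> \<tau>\<^sub>1 \<tau>\<^sub>2 \<tau>\<^sub>3 :: real
  assumes "\<tau> \<ge> 0" "0 \<le> \<mu>" "\<mu> < 1" "\<tau>\<^sub>1 \<ge> 0" "\<tau>\<^sub>2 \<ge> 0" "\<tau>\<^sub>3 \<ge> 0"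
  shows "\<exists>C::real. \<forall>(m::nat) (N::nat) (R::real)
            (\<phi>::'s::finite \<Rightarrow> 's \<Rightarrow> 'a::finite \<Rightarrow> 'd::finite \<Rightarrow> real)
            (\<xi>::'s \<Rightarrow> 's pmf \<Rightarrow> 'a \<Rightarrow> real)
            (\<beta>::(nat \<Rightarrow> real) \<Rightarrow> 'd param \<Rightarrow> 'd param)
            (s::'s) (dS::'s pmf) (a::'a) (s'::'s) (dS'::'s pmf) (a'::'a).
     0 < m \<and> 0 < N \<and> 1 \<le> R
     \<and> (\<forall>s x a. dotp (\<phi> s x a) (\<phi> s x a) \<le> 1)
     \<and> (\<forall>s d a. ennreal ((\<xi> s d a)\<^sup>2) \<le>
           ennreal \<tau>\<^sub>1 * (\<integral>\<^sup>+ u. \<integral>\<^sup>+ \<beta>0. ennreal (measure_pmf.expectation d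
                 (\<lambda>x. (nn m u \<beta>0 (\<phi> s x a))\<^sup>2)) \<partial>gauss_init m \<partial>measure_pmf (u_init m))
           + ennreal (\<tau>\<^sub>2 * R\<^sup>2 + \<tau>\<^sub>3))
     \<and> (\<forall>u \<beta>0. pnorm2 m (\<lambda>j i. \<beta> u \<beta>0 j i - \<beta>0 j i) \<le> R\<^sup>2)
     \<longrightarrow> (\<integral>\<^sup>+ u. \<integral>\<^sup>+ \<beta>0. \<integral>\<^sup>+ w.
            ennreal (pnorm2 m (\<lambda>j i.
                g_emp m u (\<beta> u \<beta>0) \<phi> \<xi> \<tau> \<mu> N s dS (fst w) a s' (snd w) a' j i
              - g_pop m u (\<beta> u \<beta>0) \<phi> \<xi> \<tau> \<mu> s dS a s' dS' a' j i))
          \<partial>measure_pmf (pair_pmf (samples N dS) (samples N dS'))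
          \<partial>gauss_init m \<partial>measure_pmf (u_init m))
        \<le> ennreal (C * R\<^sup>2 / real N)"
  using assms
  by (intro exI[of _ "80 + 6 * \<tau>\<^sup>2 * (\<tau>\<^sub>1 + \<tau>\<^sub>2 + \<tau>\<^sub>3)"] allI impI)
    (auto intro!: nn_integral_sample_gradient_error_le)

end
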